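(* Let $\|\cdot\|$ be a norm on $\mathbf{R}^p$ with dual norm $\|\cdot\|_*$, let $0\le v\le 1$, $M_v>0$, and let $g_0,\dots,g_T:\mathbf{R}^p\to\mathbf{R}$ be convex functions such that each $g_t$ has H\"older continuous (sub)gradients of degree $v$ with constant $M_v(g_t)<M_v$, i.e. $\|\nabla g_t(x)-\nabla g_t(y)\|_*\le M_v(g_t)\|x-y\|^v$ for all $x,y$. Let $h$ be a simple convex function and set $f_{g_t}(x)=g_t(x)+h(x)$. Let $x^*$ be a solution of $\min_x \frac{1}{T+1}\sum_{t=0}^T g_t(x)+h(x)$. Let the sequence $\{x_t\}$ and the numbers $L_t$ be generated by the general O-UPGM described in the context (with inputs $L_0>0$, $\epsilon>0$, starting point $x_0$). Then $$\sum_{t=0}^{T}\frac{1}{L_{t+1}}\bigl[f_{g_t}(x_{t+1})-f_{g_t}(x^* )\bigr]\le \frac{\epsilon}{2}S_T+2r_0(x^* ),$$ where $S_T=\sum_{t=1}^{T+1}\frac{1}{L_t}$ and $r_0(y)=\xi(x_0,y)$.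
   Context: A prox-function $d:\mathbf{R}^p\to\mathbf{R}$ is differentiable, strongly convex with convexity parameter $1$ with respect to $\|\cdot\|$, and has minimum value $0$. The Bregman distance is $\xi(x,y)=d(y)-d(x)-\langle\nabla d(x),y-x\rangle$. $\nabla g$ denotes a gradient, or any subgradient when $g$ is nonsmooth. For $M>0$ and a function $g$, the Bregman mapping is $\mathfrak{B}_{M,g}(x)=\arg\min_y\bigl[g(x)+\langle\nabla g(x),y-x\rangle+M\xi(y,x)+h(y)\bigr]$. General O-UPGM: given $L_0>0$, $\epsilon>0$ and $x_0$, for $t=0,1,\dots,T$: find the smallest integer $i_t\ge 0$ such that $\hat x=\mathfrak{B}_{2^{i_t}L_t,g_t}(x_t)$ satisfies $g_t(\hat x)+h(\hat x)\le g_t(x_t)+\langle\nabla g_t(x_t),\hat x-x_t\rangle+2^{i_t}L_t\xi(\hat x,x_t)+h(\hat x)+\frac{\epsilon}{2}$; then set $x_{t+1}=\hat x$ and $L_{t+1}=2^{i_t-1}L_t$. The output is $\bar x=\frac{1}{S_T}\sum_{t=1}^{T+1}\frac{1}{L_t}x_t$. *)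

theory Defs
  imports "HOL-Analysis.Analysis"
begin

definition is_norm :: "(real^'n \<Rightarrow> real) \<Rightarrow> bool" where
  "is_norm N \<longleftrightarrow> (\<forall>x. N x = 0 \<longleftrightarrow> x = 0) \<and> (\<forall>c x. N (c *\<^sub>R x) = \<bar>c\<bar> * N x)
     \<and> (\<forall>x y. N (x + y) \<le> N x + N y)"

definition dual_norm :: "(real^'n \<Rightarrow> real) \<Rightarrow> real^'n \<Rightarrow> real" where
  "dual_norm N s = (SUP x\<in>{x. N x \<le> 1}. s \<bullet> x)"

definition strongly_convex_wrt :: "(real^'n \<Rightarrow> real) \<Rightarrow> real \<Rightarrow> (real^'n \<Rightarrow> real) \<Rightarrow> bool" where
  "strongly_convex_wrt N mu d \<longleftrightarrow> (\<forall>x y a. 0 \<le> a \<and> a \<le> 1 \<longrightarrow>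
      d (a *\<^sub>R x + (1 - a) *\<^sub>R y) \<le> a * d x + (1 - a) * d y - mu / 2 * a * (1 - a) * (N (x - y))\<^sup>2)"

definition prox_function :: "(real^'n \<Rightarrow> real) \<Rightarrow> (real^'n \<Rightarrow> real) \<Rightarrow> (real^'n \<Rightarrow> real^'n) \<Rightarrow> bool" where
  "prox_function N d gd \<longleftrightarrow> (\<forall>x. (d has_derivative (\<lambda>u. gd x \<bullet> u)) (at x))
     \<and> strongly_convex_wrt N 1 d \<and> (\<forall>x. 0 \<le> d x) \<and> (\<exists>x. d x = 0)"

definition bregman :: "(real^'n \<Rightarrow> real) \<Rightarrow> (real^'n \<Rightarrow> real^'n) \<Rightarrow> real^'n \<Rightarrow> real^'n \<Rightarrow> real" where
  "bregman d gd x y = d y - d x - gd x \<bullet> (y - x)"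

definition is_subgradient :: "(real^'n \<Rightarrow> real) \<Rightarrow> real^'n \<Rightarrow> real^'n \<Rightarrow> bool" where
  "is_subgradient g x s \<longleftrightarrow> (\<forall>y. g x + s \<bullet> (y - x) \<le> g y)"

text \<open>Bregman mapping B_{M,g}(x); G is the (sub)gradient selection of g.
  The prox-term is M xi(x,y) with prox-center x.\<close>
definition bregman_map ::
  "(real^'n \<Rightarrow> real) \<Rightarrow> (real^'n \<Rightarrow> real^'n) \<Rightarrow> (real^'n \<Rightarrow> real) \<Rightarrow>
   (real^'n \<Rightarrow> real) \<Rightarrow> (real^'n \<Rightarrow> real^'n) \<Rightarrow> real \<Rightarrow> real^'n \<Rightarrow> real^'n" where
  "bregman_map d gd h g G M x =
     arg_min (\<lambda>y. g x + G x \<bullet> (y - x) + M * bregman d gd x y + h y) (\<lambda>_. True)"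

definition ls_ok ::
  "(real^'n \<Rightarrow> real) \<Rightarrow> (real^'n \<Rightarrow> real^'n) \<Rightarrow> (real^'n \<Rightarrow> real) \<Rightarrow>
   (real^'n \<Rightarrow> real) \<Rightarrow> (real^'n \<Rightarrow> real^'n) \<Rightarrow> real \<Rightarrow> real \<Rightarrow> real^'n \<Rightarrow> nat \<Rightarrow> bool" where
  "ls_ok d gd h g G eps Lt xt j \<longleftrightarrow>
     (let xh = bregman_map d gd h g G (2 ^ j * Lt) xt in
      g xh + h xh \<le> g xt + G xt \<bullet> (xh - xt) + 2 ^ j * Lt * bregman d gd xt xh + h xh + eps / 2)"

definition oupgm ::
  "(real^'n \<Rightarrow> real) \<Rightarrow> (real^'n \<Rightarrow> real^'n) \<Rightarrow> (real^'n \<Rightarrow> real) \<Rightarrow>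
   (nat \<Rightarrow> real^'n \<Rightarrow> real) \<Rightarrow> (nat \<Rightarrow> real^'n \<Rightarrow> real^'n) \<Rightarrow> real \<Rightarrow> real \<Rightarrow> real^'n \<Rightarrow> nat \<Rightarrow>
   (nat \<Rightarrow> real^'n) \<Rightarrow> (nat \<Rightarrow> real) \<Rightarrow> (nat \<Rightarrow> nat) \<Rightarrow> bool" where
  "oupgm d gd h g G L0 eps x0 T x L i \<longleftrightarrow>
     x 0 = x0 \<and> L 0 = L0 \<and>
     (\<forall>t\<le>T.
        ls_ok d gd h (g t) (G t) eps (L t) (x t) (i t) \<and>
        (\<forall>j<i t. \<not> ls_ok d gd h (g t) (G t) eps (L t) (x t) j) \<and>
        x (Suc t) = bregman_map d gd h (g t) (G t) (2 ^ i t * L t) (x t) \<and>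
        L (Suc t) = 2 ^ i t * L t / 2)"

end

theory Submission
  imports Defs
begin

text \<open>Each step decreases the Bregman distance to an arbitrary point \<open>y\<close>. The Bregman mapping
  minimizes a strongly convex model (so the minimizer exists), and its first-order optimality
  condition gives the three-point inequality: the model at \<open>y\<close> exceeds its minimum by
  \<open>M \<xi>(x (t+1), y)\<close>. The line-search test bounds \<open>f\<^sub>t (x (t+1))\<close> from above by the model
  minimum, the subgradient inequality bounds \<open>f\<^sub>t y\<close> from below by the model at \<open>y\<close>, and
  \<open>M = 2 L (t+1)\<close>, so
  \<open>(f\<^sub>t (x (t+1)) - f\<^sub>t y) / L (t+1) \<le> 2 (\<xi>(x t, y) - \<xi>(x (t+1), y)) + \<epsilon> / (2 L (t+1))\<close>,
  which telescopes.\<close>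

section \<open>Norms on \<open>R^p\<close>\<close>

lemma is_norm_zero: "is_norm N \<Longrightarrow> N 0 = 0"
  unfolding is_norm_def by blast

lemma is_norm_scaleR: "is_norm N \<Longrightarrow> N (c *\<^sub>R x) = \<bar>c\<bar> * N x"
  unfolding is_norm_def by blast

lemma is_norm_triangle: "is_norm N \<Longrightarrow> N (x + y) \<le> N x + N y"
  unfolding is_norm_def by blast

lemma is_norm_minus_commute: "is_norm N \<Longrightarrow> N (x - y) = N (y - x)"
  using is_norm_scaleR[of N "-1" "y - x"] by simp

lemma is_norm_nonneg:
  assumes "is_norm N"
  shows "0 \<le> N x"
  using is_norm_triangle[OF assms, of x "- x"] is_norm_minus_commute[OF assms, of x 0]
  by (simp add: is_norm_zero[OF assms])

lemma is_norm_sum: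
  assumes "is_norm N"
  shows "N (sum f S) \<le> (\<Sum>i\<in>S. N (f i))"
proof (induction S rule: infinite_finite_induct)
  case (insert a S)
  then show ?case using is_norm_triangle[OF assms, of "f a" "sum f S"] by simp
qed (simp_all add: is_norm_zero[OF assms])

lemma is_norm_le_euclidean:
  fixes N :: "real^'n \<Rightarrow> real"
  assumes "is_norm N"
  shows "N x \<le> (\<Sum>b\<in>Basis. N b) * norm x"
proof -
  have "N x = N (\<Sum>b\<in>Basis. (x \<bullet> b) *\<^sub>R b)" by (simp add: euclidean_representation)
  also have "\<dots> \<le> (\<Sum>b\<in>Basis. N ((x \<bullet> b) *\<^sub>R b))" by (rule is_norm_sum[OF assms])
  also have "\<dots> = (\<Sum>b\<in>Basis. \<bar>x \<bullet> b\<bar> * N b)" by (simp add: is_norm_scaleR[OF assms])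
  also have "\<dots> \<le> (\<Sum>b\<in>Basis. norm x * N b)"
    by (intro sum_mono mult_right_mono) (auto simp: Basis_le_norm is_norm_nonneg[OF assms])
  finally show ?thesis by (simp add: sum_distrib_left mult.commute)
qed

lemma is_norm_continuous_on:
  fixes N :: "real^'n \<Rightarrow> real"
  assumes "is_norm N"
  shows "continuous_on UNIV N"
proof (rule lipschitz_on_continuous_on)
  let ?C = "\<Sum>b\<in>Basis. N (b::real^'n)"
  show "?C-lipschitz_on UNIV N"
  proof (rule lipschitz_onI)
    fix x y :: "real^'n"
    have "N x \<le> N y + N (x - y)" "N y \<le> N x + N (x - y)"
      using is_norm_triangle[OF assms, of y "x - y"] is_norm_triangle[OF assms, of x "y - x"]
        is_norm_minus_commute[OF assms, of x y] by simp_all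
    with is_norm_le_euclidean[OF assms, of "x - y"]
    show "dist (N x) (N y) \<le> ?C * dist x y" by (simp add: dist_real_def dist_norm abs_le_iff)
  qed (simp add: sum_nonneg is_norm_nonneg[OF assms])
qed

lemma is_norm_ge_euclidean:
  fixes N :: "real^'n \<Rightarrow> real"
  assumes "is_norm N"
  obtains c where "c > 0" "\<And>y. c * norm y \<le> N y"
proof -
  have "sphere (0::real^'n) 1 \<noteq> {}" by simp
  then obtain u where u: "u \<in> sphere (0::real^'n) 1" "\<And>w. w \<in> sphere 0 1 \<Longrightarrow> N u \<le> N w"
    using continuous_attains_inf[OF compact_sphere _ continuous_on_subset[OF is_norm_continuous_on[OF assms]]]
    by blast
  have "u \<noteq> 0" using u(1) by auto
  then have "N u > 0"
    using is_norm_nonneg[OF assms, of u] assms unfolding is_norm_def by force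
  moreover have "N u * norm y \<le> N y" for y :: "real^'n"
  proof (cases "y = 0")
    case False
    then have "N u \<le> N ((1 / norm y) *\<^sub>R y)" by (intro u(2)) simp
    with False show ?thesis by (simp add: is_norm_scaleR[OF assms] field_simps)
  qed (simp add: is_norm_zero[OF assms])
  ultimately show ?thesis by (rule that)
qed

section \<open>First-order conditions\<close>

lemma has_derivative_difference_quotient_at_right:
  fixes f :: "'a::real_inner \<Rightarrow> real"
  assumes "(f has_derivative (\<lambda>u. D \<bullet> u)) (at x)"
  shows "((\<lambda>a. (f (x + a *\<^sub>R w) - f x) / a) \<longlongrightarrow> D \<bullet> w) (at_right 0)"
proof -
  have line: "((\<lambda>a::real. x + a *\<^sub>R w) has_derivative (\<lambda>a. a *\<^sub>R w)) (at 0)"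
    by (auto intro!: derivative_eq_intros)
  have "((f \<circ> (\<lambda>a. x + a *\<^sub>R w)) has_derivative ((\<lambda>u. D \<bullet> u) \<circ> (\<lambda>a. a *\<^sub>R w))) (at 0)"
    using diff_chain_at[OF line] assms by simp
  moreover have "(\<lambda>u. D \<bullet> u) \<circ> (\<lambda>a. a *\<^sub>R w) = (*) (D \<bullet> w)"
    by (auto simp: fun_eq_iff)
  ultimately have "((\<lambda>a. f (x + a *\<^sub>R w)) has_real_derivative D \<bullet> w) (at 0)"
    by (simp add: has_field_derivative_def o_def)
  then have "((\<lambda>a. (f (x + a *\<^sub>R w) - f x) / a) \<longlongrightarrow> D \<bullet> w) (at 0)"
    by (simp add: DERIV_def)
  then show ?thesis by (rule tendsto_mono[OF at_le, rotated]) simp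
qed

lemma has_derivative_inner_le_difference_quotient:
  fixes f :: "'a::real_inner \<Rightarrow> real"
  assumes "(f has_derivative (\<lambda>u. D \<bullet> u)) (at x)"
    and "\<And>a. 0 < a \<Longrightarrow> a \<le> 1 \<Longrightarrow> (f (x + a *\<^sub>R w) - f x) / a \<le> c"
  shows "D \<bullet> w \<le> c"
proof (rule tendsto_upperbound[OF has_derivative_difference_quotient_at_right[OF assms(1)]])
  show "\<forall>\<^sub>F a in at_right 0. (f (x + a *\<^sub>R w) - f x) / a \<le> c"
    unfolding eventually_at_right[of 0 "1::real", simplified] using assms(2) by (intro exI[of _ 1]) auto
qed simp

lemma has_derivative_inner_ge_difference_quotient:
  fixes f :: "'a::real_inner \<Rightarrow> real"
  assumes "(f has_derivative (\<lambda>u. D \<bullet> u)) (at x)"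
    and "\<And>a. 0 < a \<Longrightarrow> a \<le> 1 \<Longrightarrow> c \<le> (f (x + a *\<^sub>R w) - f x) / a"
  shows "c \<le> D \<bullet> w"
proof (rule tendsto_lowerbound[OF has_derivative_difference_quotient_at_right[OF assms(1)]])
  show "\<forall>\<^sub>F a in at_right 0. c \<le> (f (x + a *\<^sub>R w) - f x) / a"
    unfolding eventually_at_right[of 0 "1::real", simplified] using assms(2) by (intro exI[of _ 1]) auto
qed simp

lemma convex_on_above_tangent:
  fixes f :: "'a::real_inner \<Rightarrow> real"
  assumes "convex_on UNIV f" and "(f has_derivative (\<lambda>u. D \<bullet> u)) (at x)"
  shows "f x + D \<bullet> (y - x) \<le> f y"
proof -
  have "D \<bullet> (y - x) \<le> f y - f x"
  proof (rule has_derivative_inner_le_difference_quotient[OF assms(2)])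
    fix a :: real assume a: "0 < a" "a \<le> 1"
    have "f (x + a *\<^sub>R (y - x)) = f ((1 - a) *\<^sub>R x + a *\<^sub>R y)"
      by (simp add: algebra_simps)
    also have "\<dots> \<le> (1 - a) * f x + a * f y"
      using convex_onD[OF assms(1), of a x y] a by simp
    finally have "f (x + a *\<^sub>R (y - x)) - f x \<le> a * (f y - f x)"
      by (simp add: algebra_simps)
    then show "(f (x + a *\<^sub>R (y - x)) - f x) / a \<le> f y - f x"
      using a by (simp add: divide_le_eq mult.commute)
  qed
  then show ?thesis by simp
qed

lemma minimizer_smooth_plus_convex:
  fixes f h :: "'a::real_inner \<Rightarrow> real"
  assumes "(f has_derivative (\<lambda>u. D \<bullet> u)) (at z)" and "convex_on UNIV h"
    and min: "\<And>y. f z + h z \<le> f y + h y"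
  shows "h z - D \<bullet> (y - z) \<le> h y"
proof -
  have "h z - h y \<le> D \<bullet> (y - z)"
  proof (rule has_derivative_inner_ge_difference_quotient[OF assms(1)])
    fix a :: real assume a: "0 < a" "a \<le> 1"
    have "h (z + a *\<^sub>R (y - z)) = h ((1 - a) *\<^sub>R z + a *\<^sub>R y)"
      by (simp add: algebra_simps)
    also have "\<dots> \<le> (1 - a) * h z + a * h y"
      using convex_onD[OF assms(2), of a z y] a by simp
    finally have "a * (h z - h y) \<le> f (z + a *\<^sub>R (y - z)) - f z"
      using min[of "z + a *\<^sub>R (y - z)"] by (simp add: algebra_simps)
    then show "h z - h y \<le> (f (z + a *\<^sub>R (y - z)) - f z) / a"
      using a by (simp add: le_divide_eq mult.commute)
  qed
  then show ?thesis by linarith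
qed

section \<open>Strong convexity and existence of minimizers\<close>

lemma strongly_convex_wrt_imp_convex_on:
  assumes "strongly_convex_wrt N mu f" and "0 \<le> mu"
  shows "convex_on UNIV f"
proof (rule convex_onI)
  fix t :: real and x y assume t: "0 < t" "t < 1"
  have "f ((1 - t) *\<^sub>R x + t *\<^sub>R y)
      \<le> (1 - t) * f x + t * f y - mu / 2 * (1 - t) * t * (N (x - y))\<^sup>2"
    using assms(1)[unfolded strongly_convex_wrt_def, rule_format, of "1 - t" x y] t by simp
  moreover have "0 \<le> mu / 2 * (1 - t) * t * (N (x - y))\<^sup>2" using assms(2) t by simp
  ultimately show "f ((1 - t) *\<^sub>R x + t *\<^sub>R y) \<le> (1 - t) * f x + t * f y" by simp
qed simp

lemma strongly_convex_wrt_add_convex: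
  assumes "strongly_convex_wrt N mu f" and "convex_on UNIV h"
  shows "strongly_convex_wrt N mu (\<lambda>x. f x + h x)"
  unfolding strongly_convex_wrt_def
proof (intro allI impI)
  fix a :: real and x y assume a: "0 \<le> a \<and> a \<le> 1"
  have "h (a *\<^sub>R x + (1 - a) *\<^sub>R y) \<le> a * h x + (1 - a) * h y"
    using convex_onD[OF assms(2), of "1 - a" x y] a by simp
  moreover have "f (a *\<^sub>R x + (1 - a) *\<^sub>R y)
      \<le> a * f x + (1 - a) * f y - mu / 2 * a * (1 - a) * (N (x - y))\<^sup>2"
    using assms(1) a unfolding strongly_convex_wrt_def by blast
  ultimately show "f (a *\<^sub>R x + (1 - a) *\<^sub>R y) + h (a *\<^sub>R x + (1 - a) *\<^sub>R y)
      \<le> a * (f x + h x) + (1 - a) * (f y + h y) - mu / 2 * a * (1 - a) * (N (x - y))\<^sup>2"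
    unfolding distrib_left by linarith
qed

lemma strongly_convex_wrt_cmul:
  assumes "strongly_convex_wrt N mu f" and "0 \<le> c"
  shows "strongly_convex_wrt N (c * mu) (\<lambda>x. c * f x)"
  unfolding strongly_convex_wrt_def
proof (intro allI impI)
  fix a :: real and x y assume a: "0 \<le> a \<and> a \<le> 1"
  have "c * f (a *\<^sub>R x + (1 - a) *\<^sub>R y)
      \<le> c * (a * f x + (1 - a) * f y - mu / 2 * a * (1 - a) * (N (x - y))\<^sup>2)"
    using assms a unfolding strongly_convex_wrt_def by (simp add: mult_left_mono)
  then show "c * f (a *\<^sub>R x + (1 - a) *\<^sub>R y)
      \<le> a * (c * f x) + (1 - a) * (c * f y) - c * mu / 2 * a * (1 - a) * (N (x - y))\<^sup>2"
    by (simp add: algebra_simps)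
qed

lemma convex_on_affine_add:
  fixes c x :: "'a::real_inner"
  assumes "convex_on UNIV h"
  shows "convex_on UNIV (\<lambda>y. c \<bullet> (y - x) + b + h y)"
proof -
  have "convex_on UNIV (\<lambda>y. c \<bullet> (y - x) + b)"
    by (rule convex_onI) (auto simp: inner_diff_right inner_add_right algebra_simps)
  then show ?thesis using assms by (rule convex_on_add)
qed

text \<open>Comparing \<open>F\<close> on the unit sphere with \<open>F 0\<close> and \<open>F y\<close>, the quadratic term of strong
  convexity (with \<open>N \<ge> c \<parallel>\<cdot>\<parallel>\<close>) grows linearly in \<open>\<parallel>y\<parallel>\<close> and eventually wins.\<close>

lemma strongly_convex_wrt_ge_origin_outside_ball:
  fixes F N :: "real^'n \<Rightarrow> real"
  assumes nrm: "is_norm N" and sc: "strongly_convex_wrt N mu F" and mu: "mu > 0"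
    and cont: "continuous_on UNIV F"
  obtains R where "\<And>y. R < norm y \<Longrightarrow> F 0 \<le> F y"
proof -
  obtain c where c: "c > 0" "\<And>y. c * norm y \<le> N y" using is_norm_ge_euclidean[OF nrm] by blast
  have "sphere (0::real^'n) 1 \<noteq> {}" by simp
  then obtain w where w: "\<And>u. u \<in> sphere 0 1 \<Longrightarrow> F w \<le> F u"
    using continuous_attains_inf[OF compact_sphere _ continuous_on_subset[OF cont]] by blast
  define R where "R = 1 + max 0 (2 * (F 0 - F w) / (mu * c\<^sup>2))"
  have "F 0 \<le> F y" if y: "R < norm y" for y
  proof -
    define a where "a = 1 / norm y"
    have y1: "1 < norm y" using y unfolding R_def by linarith
    then have a: "0 < a" "a < 1" unfolding a_def by (auto simp: divide_less_eq)
    have "a *\<^sub>R y \<in> sphere 0 1" using y1 unfolding a_def by auto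
    then have "F w \<le> F (a *\<^sub>R y + (1 - a) *\<^sub>R 0)" using w by simp
    also have "\<dots> \<le> a * F y + (1 - a) * F 0 - mu / 2 * a * (1 - a) * (N y)\<^sup>2"
      using sc a unfolding strongly_convex_wrt_def by (metis diff_zero less_eq_real_def)
    also have "\<dots> \<le> a * F y + (1 - a) * F 0 - mu / 2 * a * (1 - a) * (c * norm y)\<^sup>2"
      using c mu a by (intro diff_left_mono mult_left_mono power_mono) auto
    also have "mu / 2 * a * (1 - a) * (c * norm y)\<^sup>2 = mu / 2 * c\<^sup>2 * (norm y - 1)"
      using y1 unfolding a_def by (auto simp: field_simps power2_eq_square)
    finally have "F w \<le> a * F y + (1 - a) * F 0 - mu / 2 * c\<^sup>2 * (norm y - 1)" .
    moreover have "2 * (F 0 - F w) / (mu * c\<^sup>2) \<le> norm y - 1" using y unfolding R_def by linarith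
    then have "2 * (F 0 - F w) \<le> (norm y - 1) * (mu * c\<^sup>2)"
      using mu c by (simp add: pos_divide_le_eq)
    then have "F 0 - F w \<le> mu / 2 * c\<^sup>2 * (norm y - 1)" by (simp add: algebra_simps)
    moreover have "(1 - a) * F 0 = F 0 - a * F 0" by (simp add: algebra_simps)
    ultimately have "a * F 0 \<le> a * F y" by linarith
    with a show ?thesis by simp
  qed
  then show ?thesis by (rule that)
qed

lemma strongly_convex_wrt_has_min:
  fixes F N :: "real^'n \<Rightarrow> real"
  assumes "is_norm N" and "strongly_convex_wrt N mu F" and "mu > 0"
    and cont: "continuous_on UNIV F"
  obtains z where "\<And>y. F z \<le> F y"
proof -
  obtain R where R: "\<And>y. R < norm y \<Longrightarrow> F 0 \<le> F y"
    using strongly_convex_wrt_ge_origin_outside_ball[OF assms] by blast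
  have "cball (0::real^'n) \<bar>R\<bar> \<noteq> {}" by simp
  then obtain z where z: "\<And>y. y \<in> cball 0 \<bar>R\<bar> \<Longrightarrow> F z \<le> F y"
    using continuous_attains_inf[OF compact_cball _ continuous_on_subset[OF cont]] by blast
  have "F z \<le> F y" for y
    using z[of y] z[of 0] R[of y] by (cases "norm y \<le> \<bar>R\<bar>") force+
  then show ?thesis by (rule that)
qed

section \<open>The Bregman mapping\<close>

lemma prox_function_has_derivative:
  "prox_function N d gd \<Longrightarrow> (d has_derivative (\<lambda>u. gd x \<bullet> u)) (at x)"
  unfolding prox_function_def by blast

lemma bregman_nonneg:
  assumes "prox_function N d gd"
  shows "0 \<le> bregman d gd x y"
proof -
  have "strongly_convex_wrt N 1 d" using assms unfolding prox_function_def by blast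
  then have "convex_on UNIV d" by (rule strongly_convex_wrt_imp_convex_on) simp
  from convex_on_above_tangent[OF this prox_function_has_derivative[OF assms], of x y]
  show ?thesis unfolding bregman_def by simp
qed

text \<open>The model minimized by the Bregman mapping is \<open>M d\<close> plus a convex remainder.\<close>

lemma bregman_model_eq:
  "g x + G x \<bullet> (y - x) + M * bregman d gd x y + h y
     = M * d y + ((G x - M *\<^sub>R gd x) \<bullet> (y - x) + (g x - M * d x) + h y)"
  unfolding bregman_def by (simp add: inner_diff_left algebra_simps)

lemma bregman_map_minimizes:
  fixes N :: "real^'n \<Rightarrow> real" and g :: "real^'n \<Rightarrow> real" and G :: "real^'n \<Rightarrow> real^'n"
    and x :: "real^'n"
  assumes nrm: "is_norm N" and prox: "prox_function N d gd" and hconv: "convex_on UNIV h"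
    and M: "M > 0"
  defines "xp \<equiv> bregman_map d gd h g G M x"
  shows "g x + G x \<bullet> (xp - x) + M * bregman d gd x xp + h xp \<le> g x + G x \<bullet> (y - x) + M * bregman d gd x y + h y"
proof -
  define \<psi> where "\<psi> y = (G x - M *\<^sub>R gd x) \<bullet> (y - x) + (g x - M * d x) + h y" for y
  define \<phi> where "\<phi> y = M * d y + \<psi> y" for y
  have \<phi>_eq: "(\<lambda>y. g x + G x \<bullet> (y - x) + M * bregman d gd x y + h y) = \<phi>"
    unfolding \<phi>_def \<psi>_def by (simp add: bregman_model_eq)
  have "strongly_convex_wrt N (M * 1) \<phi>"
    unfolding \<phi>_def \<psi>_def using prox M
    by (intro strongly_convex_wrt_add_convex strongly_convex_wrt_cmul convex_on_affine_add hconv)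
      (auto simp: prox_function_def)
  moreover have "continuous_on UNIV \<phi>"
  proof -
    have "continuous_on UNIV d"
      using prox_function_has_derivative[OF prox]
      by (intro continuous_at_imp_continuous_on) (blast intro: has_derivative_continuous)
    moreover have "continuous_on UNIV h" using convex_on_continuous[OF _ hconv] by simp
    ultimately show ?thesis unfolding \<phi>_def \<psi>_def by (intro continuous_intros) auto
  qed
  ultimately obtain z where "\<And>y. \<phi> z \<le> \<phi> y"
    using strongly_convex_wrt_has_min[OF nrm] M by (metis mult_1_right)
  then have "\<exists>z. is_arg_min \<phi> (\<lambda>_. True) z" unfolding is_arg_min_def by (auto simp: not_less)
  then have "is_arg_min \<phi> (\<lambda>_. True) xp"
    unfolding xp_def bregman_map_def arg_min_def \<phi>_eq by (rule someI_ex)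
  then show ?thesis unfolding is_arg_min_def \<phi>_eq[THEN fun_cong] by (auto simp: not_less)
qed

lemma bregman_map_three_point:
  fixes N :: "real^'n \<Rightarrow> real" and g :: "real^'n \<Rightarrow> real" and G :: "real^'n \<Rightarrow> real^'n"
    and x :: "real^'n"
  assumes nrm: "is_norm N" and prox: "prox_function N d gd" and hconv: "convex_on UNIV h"
    and M: "M > 0"
  defines "xp \<equiv> bregman_map d gd h g G M x"
  shows "g x + G x \<bullet> (xp - x) + M * bregman d gd x xp + h xp + M * bregman d gd xp y
    \<le> g x + G x \<bullet> (y - x) + M * bregman d gd x y + h y"
proof -
  define \<psi> where "\<psi> y = (G x - M *\<^sub>R gd x) \<bullet> (y - x) + (g x - M * d x) + h y" for y
  have "((\<lambda>y. M * d y) has_derivative (\<lambda>u. (M *\<^sub>R gd xp) \<bullet> u)) (at xp)"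
    using has_derivative_mult_right[OF prox_function_has_derivative[OF prox], of M] by simp
  moreover have "convex_on UNIV \<psi>" unfolding \<psi>_def by (rule convex_on_affine_add[OF hconv])
  moreover have "M * d xp + \<psi> xp \<le> M * d y + \<psi> y" for y
    using bregman_map_minimizes[OF nrm prox hconv M, where g=g and G=G and x=x and y=y]
    unfolding xp_def \<psi>_def bregman_model_eq .
  ultimately have "\<psi> xp - (M *\<^sub>R gd xp) \<bullet> (y - xp) \<le> \<psi> y"
    by (rule minimizer_smooth_plus_convex)
  then show ?thesis unfolding bregman_model_eq \<psi>_def[symmetric]
    by (simp add: bregman_def algebra_simps)
qed

section \<open>One step of O-UPGM\<close>

lemma ls_ok_descent:
  fixes N :: "real^'n \<Rightarrow> real" and g :: "real^'n \<Rightarrow> real" and G :: "real^'n \<Rightarrow> real^'n"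
    and x :: "real^'n"
  assumes nrm: "is_norm N" and prox: "prox_function N d gd" and hconv: "convex_on UNIV h"
    and Lt: "Lt > 0" and subgrad: "is_subgradient g x (G x)"
    and ls: "ls_ok d gd h g G eps Lt x j"
  defines "M \<equiv> 2 ^ j * Lt"
  defines "xp \<equiv> bregman_map d gd h g G M x"
  shows "g xp + h xp - (g y + h y) \<le> M * (bregman d gd x y - bregman d gd xp y) + eps / 2"
proof -
  have "M > 0" unfolding M_def using Lt by simp
  from bregman_map_three_point[OF nrm prox hconv this, where g=g and G=G and x=x and y=y]
  have "g x + G x \<bullet> (xp - x) + M * bregman d gd x xp + h xp + M * bregman d gd xp y
      \<le> g x + G x \<bullet> (y - x) + M * bregman d gd x y + h y"
    unfolding xp_def .
  moreover have "g xp + h xp \<le> g x + G x \<bullet> (xp - x) + M * bregman d gd x xp + h xp + eps / 2"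
    using ls unfolding ls_ok_def Let_def M_def xp_def .
  moreover have "g x + G x \<bullet> (y - x) \<le> g y"
    using subgrad unfolding is_subgradient_def by blast
  ultimately show ?thesis by (simp add: algebra_simps)
qed

lemma oupgm_L_pos:
  assumes "oupgm d gd h g G L0 eps x0 T x L i" and "L0 > 0" and "t \<le> Suc T"
  shows "L t > 0"
  using assms(3)
proof (induction t)
  case 0
  then show ?case using assms(1,2) unfolding oupgm_def by simp
next
  case (Suc t)
  then have "L (Suc t) = 2 ^ i t * L t / 2" using assms(1) unfolding oupgm_def by simp
  moreover have "L t > 0" using Suc by simp
  ultimately show ?case by (metis half_gt_zero mult_pos_pos zero_less_numeral zero_less_power)
qed

lemma oupgm_step_bound:
  fixes N :: "real^'n \<Rightarrow> real"
  assumes nrm: "is_norm N" and prox: "prox_function N d gd" and hconv: "convex_on UNIV h"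
    and alg: "oupgm d gd h g G L0 eps x0 T x L i" and L0: "L0 > 0" and t: "t \<le> T"
    and subgrad: "is_subgradient (g t) (x t) (G t (x t))"
  shows "1 / L (Suc t) * (g t (x (Suc t)) + h (x (Suc t)) - (g t y + h y))
    \<le> 2 * (bregman d gd (x t) y - bregman d gd (x (Suc t)) y) + eps / 2 * (1 / L (Suc t))"
proof -
  have ls: "ls_ok d gd h (g t) (G t) eps (L t) (x t) (i t)"
    and x_Suc: "x (Suc t) = bregman_map d gd h (g t) (G t) (2 ^ i t * L t) (x t)"
    and L_Suc: "2 ^ i t * L t = 2 * L (Suc t)"
    using alg t unfolding oupgm_def by auto
  have pos: "L (Suc t) > 0" and "L t > 0" using oupgm_L_pos[OF alg L0] t by simp_all
  from ls_ok_descent[OF nrm prox hconv this(2) subgrad ls, where y=y]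
  have "g t (x (Suc t)) + h (x (Suc t)) - (g t y + h y)
      \<le> 2 * L (Suc t) * (bregman d gd (x t) y - bregman d gd (x (Suc t)) y) + eps / 2"
    unfolding x_Suc L_Suc .
  then have "1 / L (Suc t) * (g t (x (Suc t)) + h (x (Suc t)) - (g t y + h y))
      \<le> 1 / L (Suc t) * (2 * L (Suc t) * (bregman d gd (x t) y - bregman d gd (x (Suc t)) y) + eps / 2)"
    using pos by (intro mult_left_mono) auto
  with pos show ?thesis by (simp add: field_simps)
qed

theorem theorem1:
  fixes N :: "real^'n \<Rightarrow> real" and d :: "real^'n \<Rightarrow> real" and gd :: "real^'n \<Rightarrow> real^'n"
    and g :: "nat \<Rightarrow> real^'n \<Rightarrow> real" and G :: "nat \<Rightarrow> real^'n \<Rightarrow> real^'n"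
    and h :: "real^'n \<Rightarrow> real" and v Mv L0 eps :: real and T :: nat
    and x0 xs :: "real^'n" and x :: "nat \<Rightarrow> real^'n" and L :: "nat \<Rightarrow> real" and i :: "nat \<Rightarrow> nat"
  assumes norm: "is_norm N"
    and prox: "prox_function N d gd"
    and v: "0 \<le> v" "v \<le> 1"
    and Mv: "Mv > 0"
    and g_convex: "\<And>t. t \<le> T \<Longrightarrow> convex_on UNIV (g t)"
    and G_subgrad: "\<And>t y. t \<le> T \<Longrightarrow> is_subgradient (g t) y (G t y)"
    and holder: "\<And>t. t \<le> T \<Longrightarrow> \<exists>Mg. 0 \<le> Mg \<and> Mg < Mv \<and>
                   (\<forall>y z. dual_norm N (G t y - G t z) \<le> Mg * N (y - z) powr v)"
    and h_convex: "convex_on UNIV h"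
    and xs_opt: "\<And>y. (\<Sum>t\<le>T. g t xs) / real (T + 1) + h xs \<le> (\<Sum>t\<le>T. g t y) / real (T + 1) + h y"
    and L0: "L0 > 0" and eps: "eps > 0"
    and alg: "oupgm d gd h g G L0 eps x0 T x L i"
  shows "(\<Sum>t\<le>T. (1 / L (Suc t)) * ((g t (x (Suc t)) + h (x (Suc t))) - (g t xs + h xs)))
           \<le> eps / 2 * (\<Sum>t\<in>{1..T+1}. 1 / L t) + 2 * bregman d gd x0 xs"
proof -
  let ?r = "\<lambda>t. bregman d gd (x t) xs"
  have "(\<Sum>t\<le>T. (1 / L (Suc t)) * ((g t (x (Suc t)) + h (x (Suc t))) - (g t xs + h xs)))
      \<le> (\<Sum>t\<le>T. 2 * (?r t - ?r (Suc t)) + eps / 2 * (1 / L (Suc t)))" (is "?lhs \<le> _")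
    using oupgm_step_bound[OF norm prox h_convex alg L0 _ G_subgrad] by (intro sum_mono) auto
  also have "\<dots> = 2 * (\<Sum>t\<le>T. ?r t - ?r (Suc t)) + eps / 2 * (\<Sum>t\<le>T. 1 / L (Suc t))"
    by (simp add: sum.distrib sum_distrib_left)
  also have "(\<Sum>t\<le>T. ?r t - ?r (Suc t)) = ?r 0 - ?r (Suc T)"
    by (rule sum_telescope)
  also have "(\<Sum>t\<le>T. 1 / L (Suc t)) = (\<Sum>t\<in>{1..T+1}. 1 / L t)"
    using sum.shift_bounds_cl_Suc_ivl[of "\<lambda>t. 1 / L t" 0 T] by (simp add: atMost_atLeast0)
  finally have "?lhs \<le> 2 * (?r 0 - ?r (Suc T)) + eps / 2 * (\<Sum>t\<in>{1..T+1}. 1 / L t)" .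
  moreover have "x 0 = x0" using alg unfolding oupgm_def by simp
  ultimately show ?thesis using bregman_nonneg[OF prox, of "x (Suc T)" xs] by simp
qed

end
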